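(* For every $\theta\in[0,\pi)$, $\overline Q^{\,\theta}_S$ has a unique minimiser on $\mathbb{R}^2$, namely $$(\alpha^S_\theta,\beta^S_\theta)=\Big(-\frac k2(1+\cos2\theta),\ \frac k2\sin2\theta\Big),$$ and $\min_{\mathbb{R}^2}\overline Q^{\,\theta}_S=\bar e_S$.
   Context: Fix constants $c_1>0$, $c_2>0$, $c:=c_1+c_2$, $k>0$, $\bar e_S\ge0$, $\theta\in[0,\pi)$. Let $\bar A^\theta_S:=k\begin{pmatrix}-\cos^2\theta&\sin\theta\cos\theta\\ \sin\theta\cos\theta&-\sin^2\theta\end{pmatrix}$. For matrices $M\cdot N={\rm tr}(M^{\rm T}N)$, $|M|^2=M\cdot M$. For $M\in\mathbb{R}^{2\times2}_{\rm sym}$, $L^\theta_S(M):=-2c_1M\cdot\bar A^\theta_S+2c_2k\,{\rm tr}M+ck^2+\bar e_S$. For $(\alpha,\beta)\in\mathbb{R}^2$, $$\overline Q^{\,\theta}_S(\alpha,\beta):=\min_{\gamma\in\mathbb{R}}\Big\{c|M|^2+2c|\det M|+L^\theta_S(M): M=\begin{pmatrix}\alpha&\beta\\ \beta&\gamma\end{pmatrix}\Big\}.$$ *)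

theory Defs
  imports "HOL-Analysis.Analysis"
begin

definition frob :: "real^2^2 \<Rightarrow> real^2^2 \<Rightarrow> real" where
  "frob M N = trace (transpose M ** N)"

definition sqnorm :: "real^2^2 \<Rightarrow> real" where
  "sqnorm M = frob M M"

definition mat2 :: "real \<Rightarrow> real \<Rightarrow> real \<Rightarrow> real \<Rightarrow> real^2^2" where
  "mat2 a b c d = vector [vector [a, b], vector [c, d]]"

definition Abar :: "real \<Rightarrow> real \<Rightarrow> real^2^2" where
  "Abar k \<theta> = k *\<^sub>R mat2 (- (cos \<theta>)\<^sup>2) (sin \<theta> * cos \<theta>) (sin \<theta> * cos \<theta>) (- (sin \<theta>)\<^sup>2)"

definition LS :: "real \<Rightarrow> real \<Rightarrow> real \<Rightarrow> real \<Rightarrow> real \<Rightarrow> real^2^2 \<Rightarrow> real" where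
  "LS c1 c2 k eS \<theta> M = - 2 * c1 * frob M (Abar k \<theta>) + 2 * c2 * k * trace M
      + (c1 + c2) * k\<^sup>2 + eS"

definition QS_integrand :: "real \<Rightarrow> real \<Rightarrow> real \<Rightarrow> real \<Rightarrow> real \<Rightarrow> real^2^2 \<Rightarrow> real" where
  "QS_integrand c1 c2 k eS \<theta> M =
     (c1 + c2) * sqnorm M + 2 * (c1 + c2) * \<bar>det M\<bar> + LS c1 c2 k eS \<theta> M"

(* \bar Q^\theta_S(\alpha,\beta) = min over gamma (the min is attained; written as Inf) *)
definition Qbar :: "real \<Rightarrow> real \<Rightarrow> real \<Rightarrow> real \<Rightarrow> real \<Rightarrow> real \<times> real \<Rightarrow> real" where
  "Qbar c1 c2 k eS \<theta> p =
     (INF \<gamma>::real. QS_integrand c1 c2 k eS \<theta> (mat2 (fst p) (snd p) (snd p) \<gamma>))"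

end

theory Submission
  imports Defs "HOL-Real_Asymp.Real_Asymp"
begin

text \<open>In the frame rotated by \<open>\<theta>\<close> the matrix \<open>Abar k \<theta>\<close> becomes \<open>diag(-k, 0)\<close>,
  while \<open>|M|\<^sup>2\<close>, \<open>det M\<close> and \<open>tr M\<close> are unchanged. If \<open>p, q, r\<close> are the entries of
  \<open>M = mat2 \<alpha> \<beta> \<beta> \<gamma>\<close> in that frame, the integrand is therefore
  \<open>eS + c((p+k)\<^sup>2 + 2q\<^sup>2 + r\<^sup>2 + 2|pr - q\<^sup>2|) + 2c\<^sub>2kr\<close>. For \<open>r \<ge> 0\<close> the excess over
  \<open>eS\<close> is visibly nonnegative and vanishes only at \<open>(p, q, r) = (-k, 0, 0)\<close>; for \<open>r < 0\<close>
  the bound \<open>|pr - q\<^sup>2| \<ge> pr - q\<^sup>2\<close> shows that it is at least \<open>c(p+k+r)\<^sup>2 - 2c\<^sub>1kr > 0\<close>.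
  As the integrand is coercive in \<open>\<gamma>\<close>, the infimum defining \<open>Qbar\<close> is attained, so
  \<open>Qbar(\<alpha>, \<beta>) = eS\<close> exactly when some \<open>(\<alpha>, \<beta>, \<gamma>)\<close> rotates to \<open>(-k, 0, 0)\<close>, that is,
  when \<open>(\<alpha>, \<beta>) = (-k cos\<^sup>2\<theta>, k sin\<theta> cos\<theta>)\<close>.\<close>

lemma continuous_coercive_attains_inf:
  fixes f :: "'a::{real_normed_vector, heine_borel} \<Rightarrow> 'b::linorder_topology"
  assumes cont: "continuous_on UNIV f" and coercive: "filterlim f at_top at_infinity"
  shows "\<exists>x. \<forall>y. f x \<le> f y"
proof -
  have "eventually (\<lambda>y. f 0 \<le> f y) at_infinity"
    using coercive by (simp add: filterlim_at_top)
  then obtain R where R: "\<And>y. R \<le> norm y \<Longrightarrow> f 0 \<le> f y"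
    by (auto simp: eventually_at_infinity)
  obtain x where x: "x \<in> cball 0 \<bar>R\<bar>" "\<And>y. y \<in> cball 0 \<bar>R\<bar> \<Longrightarrow> f x \<le> f y"
    using continuous_attains_inf[OF compact_cball _ continuous_on_subset[OF cont]]
    by (metis abs_ge_zero centre_in_cball empty_iff subset_UNIV)
  have "f x \<le> f y" for y
  proof (cases "norm y \<le> \<bar>R\<bar>")
    case False
    then have "f 0 \<le> f y" by (intro R) linarith
    with x(2)[of 0] show ?thesis by simp
  qed (use x in simp)
  then show ?thesis by blast
qed

lemma mat2_nth [simp]:
  "mat2 a b c d $ 1 $ 1 = a" "mat2 a b c d $ 1 $ 2 = b"
  "mat2 a b c d $ 2 $ 1 = c" "mat2 a b c d $ 2 $ 2 = d"
  by (simp_all add: mat2_def)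

lemma scaleR_mat2: "r *\<^sub>R mat2 a b c d = mat2 (r * a) (r * b) (r * c) (r * d)"
  by (simp add: vec_eq_iff forall_2)

lemma frob_mat2:
  "frob (mat2 a b c d) (mat2 a' b' c' d') = a * a' + b * b' + c * c' + d * d'"
  by (simp add: frob_def trace_def matrix_matrix_mult_def transpose_def sum_2)

lemma trace_mat2: "trace (mat2 a b c d) = a + d"
  by (simp add: trace_def sum_2)

lemma det_mat2: "det (mat2 a b c d) = a * d - b * c"
  by (simp add: det_2)

lemma QS_integrand_mat2:
  "QS_integrand c1 c2 k eS t (mat2 a b b g) =
     (c1 + c2) * (a\<^sup>2 + 2 * b\<^sup>2 + g\<^sup>2) + 2 * (c1 + c2) * \<bar>a * g - b\<^sup>2\<bar>
     + 2 * c1 * k * (a * (cos t)\<^sup>2 - 2 * b * sin t * cos t + g * (sin t)\<^sup>2)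
     + 2 * c2 * k * (a + g) + (c1 + c2) * k\<^sup>2 + eS"
  unfolding QS_integrand_def LS_def sqnorm_def Abar_def scaleR_mat2 frob_mat2 trace_mat2 det_mat2
  by (simp add: power2_eq_square) argo

definition rotated_excess :: "real \<Rightarrow> real \<Rightarrow> real \<Rightarrow> real \<Rightarrow> real \<Rightarrow> real \<Rightarrow> real" where
  "rotated_excess c1 c2 k p q r =
     (c1 + c2) * ((p + k)\<^sup>2 + 2 * q\<^sup>2 + r\<^sup>2 + 2 * \<bar>p * r - q\<^sup>2\<bar>) + 2 * c2 * k * r"

lemma rotated_excess_pos_if_neg:
  assumes "c1 > 0" "c2 > 0" "k > 0" "r < 0"
  shows "rotated_excess c1 c2 k p q r > 0"
proof -
  have "0 < (c1 + c2) * (p + k + r)\<^sup>2 - 2 * c1 * k * r"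
  proof -
    have "2 * c1 * k * r < 0"
      using assms by (simp add: mult_pos_neg)
    moreover have "(c1 + c2) * (p + k + r)\<^sup>2 \<ge> 0"
      using assms by simp
    ultimately show ?thesis by linarith
  qed
  also have "\<dots> = (c1 + c2) * ((p + k)\<^sup>2 + r\<^sup>2 + 2 * (p * r)) + 2 * c2 * k * r"
    by (simp add: power2_eq_square algebra_simps)
  also have "\<dots> \<le> rotated_excess c1 c2 k p q r"
  proof -
    have "p * r \<le> q\<^sup>2 + \<bar>p * r - q\<^sup>2\<bar>"
      by linarith
    then show ?thesis
      unfolding rotated_excess_def using assms by (intro add_right_mono mult_left_mono) auto
  qed
  finally show ?thesis .
qed

lemma rotated_excess_nonneg:
  assumes "c1 > 0" "c2 > 0" "k > 0"
  shows "rotated_excess c1 c2 k p q r \<ge> 0"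
proof (cases "r < 0")
  case False
  then show ?thesis
    unfolding rotated_excess_def using assms by (simp add: add_nonneg_nonneg)
next
  case True
  then show ?thesis
    using rotated_excess_pos_if_neg[OF assms] by (simp add: less_imp_le)
qed

lemma rotated_excess_eq_0_iff:
  assumes "c1 > 0" "c2 > 0" "k > 0"
  shows "rotated_excess c1 c2 k p q r = 0 \<longleftrightarrow> p = - k \<and> q = 0 \<and> r = 0"
proof
  assume zero: "rotated_excess c1 c2 k p q r = 0"
  then have "r \<ge> 0"
    using rotated_excess_pos_if_neg[OF assms, of r p q] by linarith
  then have "(c1 + c2) * ((p + k)\<^sup>2 + 2 * q\<^sup>2 + r\<^sup>2) \<le> 0"
    using zero assms unfolding rotated_excess_def
    by (smt (verit) abs_ge_zero mult_nonneg_nonneg distrib_left)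
  then have "(p + k)\<^sup>2 + 2 * q\<^sup>2 + r\<^sup>2 \<le> 0"
    using assms by (simp add: mult_le_0_iff)
  then show "p = - k \<and> q = 0 \<and> r = 0"
    by (smt (verit) zero_le_power2 zero_eq_power2)
qed (simp add: rotated_excess_def)

lemma QS_integrand_rotated:
  fixes a b g t :: real
  defines "p \<equiv> a * (cos t)\<^sup>2 - 2 * b * sin t * cos t + g * (sin t)\<^sup>2"
    and "q \<equiv> a * sin t * cos t + b * ((cos t)\<^sup>2 - (sin t)\<^sup>2) - g * sin t * cos t"
    and "r \<equiv> a * (sin t)\<^sup>2 + 2 * b * sin t * cos t + g * (cos t)\<^sup>2"
  shows "QS_integrand c1 c2 k eS t (mat2 a b b g) = eS + rotated_excess c1 c2 k p q r"
proof -
  have sc: "(sin t)\<^sup>2 + (cos t)\<^sup>2 = 1"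
    by simp
  have norm: "a\<^sup>2 + 2 * b\<^sup>2 + g\<^sup>2 = p\<^sup>2 + 2 * q\<^sup>2 + r\<^sup>2"
    and det: "a * g - b\<^sup>2 = p * r - q\<^sup>2"
    and trace: "a + g = p + r"
    unfolding p_def q_def r_def using sc by algebra+
  show ?thesis
    unfolding QS_integrand_mat2 p_def[symmetric] norm det trace rotated_excess_def
    by (simp add: power2_eq_square algebra_simps)
qed

lemma rotated_coords_eq_iff:
  fixes a b g t k :: real
  shows "(a * (cos t)\<^sup>2 - 2 * b * sin t * cos t + g * (sin t)\<^sup>2 = - k
       \<and> a * sin t * cos t + b * ((cos t)\<^sup>2 - (sin t)\<^sup>2) - g * sin t * cos t = 0
       \<and> a * (sin t)\<^sup>2 + 2 * b * sin t * cos t + g * (cos t)\<^sup>2 = 0)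
     \<longleftrightarrow> (a = - k * (cos t)\<^sup>2 \<and> b = k * sin t * cos t \<and> g = - k * (sin t)\<^sup>2)"
  (is "?rotated \<longleftrightarrow> ?original")
proof
  have sc: "(sin t)\<^sup>2 + (cos t)\<^sup>2 = 1"
    by simp
  show "?rotated \<Longrightarrow> ?original"
    using sc by algebra
  show "?original \<Longrightarrow> ?rotated"
    using sc by algebra
qed

lemma QS_integrand_ge:
  assumes "c1 > 0" "c2 > 0" "k > 0"
  shows "eS \<le> QS_integrand c1 c2 k eS t (mat2 a b b g)"
  using rotated_excess_nonneg[OF assms] by (simp add: QS_integrand_rotated)

lemma QS_integrand_eq_iff:
  assumes "c1 > 0" "c2 > 0" "k > 0"
  shows "QS_integrand c1 c2 k eS t (mat2 a b b g) = eS
     \<longleftrightarrow> a = - k * (cos t)\<^sup>2 \<and> b = k * sin t * cos t \<and> g = - k * (sin t)\<^sup>2"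
  unfolding QS_integrand_rotated add_cancel_left_right rotated_excess_eq_0_iff[OF assms]
  by (rule rotated_coords_eq_iff)

lemma QS_integrand_coercive:
  assumes "c1 > 0" "c2 > 0" "k > 0"
  shows "filterlim (\<lambda>g. QS_integrand c1 c2 k eS t (mat2 a b b g)) at_top at_infinity"
proof -
  define c where "c = c1 + c2"
  define m where "m = 2 * c1 * k * (sin t)\<^sup>2 + 2 * c2 * k"
  define C where "C = 2 * c1 * k * (a * (cos t)\<^sup>2 - 2 * b * sin t * cos t) + 2 * c2 * k * a
    + c * k\<^sup>2 + eS"
  have "c > 0"
    using assms by (simp add: c_def)
  have lower: "c * (norm g)\<^sup>2 - 2 * c * k * norm g + C
      \<le> QS_integrand c1 c2 k eS t (mat2 a b b g)" for g :: real
  proof -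
    have "(sin t)\<^sup>2 \<le> 1"
      by (simp add: abs_square_le_1)
    then have "2 * c1 * k * (sin t)\<^sup>2 \<le> 2 * c1 * k"
      using assms by (simp add: mult_left_le)
    then have "0 \<le> m" "m \<le> 2 * c * k"
      using assms unfolding m_def c_def by (simp_all add: distrib_right)
    then have "\<bar>m * g\<bar> \<le> 2 * c * k * \<bar>g\<bar>"
      by (simp add: abs_mult mult_right_mono)
    then have "- (2 * c * k * \<bar>g\<bar>) \<le> m * g"
      by (simp add: abs_le_iff)
    moreover have "0 \<le> c * (a\<^sup>2 + 2 * b\<^sup>2)" "0 \<le> 2 * c * \<bar>a * g - b\<^sup>2\<bar>"
      using \<open>c > 0\<close> by simp_all
    moreover have "QS_integrand c1 c2 k eS t (mat2 a b b g)
        = c * (a\<^sup>2 + 2 * b\<^sup>2) + 2 * c * \<bar>a * g - b\<^sup>2\<bar> + c * g\<^sup>2 + m * g + C"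
      unfolding QS_integrand_mat2 c_def m_def C_def by (simp add: power2_eq_square) argo
    ultimately show ?thesis
      by (simp add: power2_abs)
  qed
  have "filterlim (\<lambda>x. c * x\<^sup>2 - 2 * c * k * x + C) at_top at_top"
    using \<open>c > 0\<close> by real_asymp
  from filterlim_compose[OF this filterlim_norm_at_top]
  show ?thesis
    by (rule filterlim_at_top_mono) (use lower in auto)
qed

lemma Qbar_attained:
  assumes "c1 > 0" "c2 > 0" "k > 0"
  shows "\<exists>g. Qbar c1 c2 k eS t (a, b) = QS_integrand c1 c2 k eS t (mat2 a b b g)"
proof -
  have "continuous_on UNIV (\<lambda>g. QS_integrand c1 c2 k eS t (mat2 a b b g))"
    unfolding QS_integrand_mat2 by (intro continuous_intros)
  then obtain g where "\<forall>h. QS_integrand c1 c2 k eS t (mat2 a b b g)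
      \<le> QS_integrand c1 c2 k eS t (mat2 a b b h)"
    using continuous_coercive_attains_inf QS_integrand_coercive[OF assms] by blast
  then have "Qbar c1 c2 k eS t (a, b) = QS_integrand c1 c2 k eS t (mat2 a b b g)"
    unfolding Qbar_def by (intro cInf_eq_minimum) auto
  then show ?thesis ..
qed

lemma Qbar_ge:
  assumes "c1 > 0" "c2 > 0" "k > 0"
  shows "eS \<le> Qbar c1 c2 k eS t p"
  using Qbar_attained[OF assms, of eS t "fst p" "snd p"] QS_integrand_ge[OF assms] by auto

lemma Qbar_eq_iff:
  assumes "c1 > 0" "c2 > 0" "k > 0"
  shows "Qbar c1 c2 k eS t p = eS \<longleftrightarrow> p = (- k * (cos t)\<^sup>2, k * sin t * cos t)"
proof
  assume "Qbar c1 c2 k eS t p = eS"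
  moreover obtain g
    where "Qbar c1 c2 k eS t p = QS_integrand c1 c2 k eS t (mat2 (fst p) (snd p) (snd p) g)"
    using Qbar_attained[OF assms, of eS t "fst p" "snd p"] by auto
  ultimately show "p = (- k * (cos t)\<^sup>2, k * sin t * cos t)"
    using QS_integrand_eq_iff[OF assms] by (metis prod.collapse)
next
  assume p: "p = (- k * (cos t)\<^sup>2, k * sin t * cos t)"
  have "bdd_below (range (\<lambda>g. QS_integrand c1 c2 k eS t (mat2 (fst p) (snd p) (snd p) g)))"
    using QS_integrand_ge[OF assms] by (intro bdd_belowI2)
  then have "Qbar c1 c2 k eS t p
      \<le> QS_integrand c1 c2 k eS t (mat2 (fst p) (snd p) (snd p) (- k * (sin t)\<^sup>2))"
    unfolding Qbar_def by (rule cINF_lower) simp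
  also have "\<dots> = eS"
    using p QS_integrand_eq_iff[OF assms] by simp
  finally show "Qbar c1 c2 k eS t p = eS"
    using Qbar_ge[OF assms] by (rule antisym)
qed

theorem lemma4p2:
  fixes c1 c2 k eS \<theta> :: real
  assumes "c1 > 0" and "c2 > 0" and "k > 0" and "eS \<ge> 0"
    and "\<theta> \<in> {0..<pi}"
  shows "(\<forall>p. (\<forall>q. Qbar c1 c2 k eS \<theta> p \<le> Qbar c1 c2 k eS \<theta> q)
              \<longleftrightarrow> p = (- k / 2 * (1 + cos (2 * \<theta>)), k / 2 * sin (2 * \<theta>)))
       \<and> Qbar c1 c2 k eS \<theta> (- k / 2 * (1 + cos (2 * \<theta>)), k / 2 * sin (2 * \<theta>)) = eS"
proof -
  note pos = assms(1-3)
  have double_angle: "(- k / 2 * (1 + cos (2 * \<theta>)), k / 2 * sin (2 * \<theta>))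
      = (- k * (cos \<theta>)\<^sup>2, k * sin \<theta> * cos \<theta>)"
    by (simp only: cos_double_cos sin_double) (simp add: algebra_simps)
  have minimal_iff:
    "(\<forall>q. Qbar c1 c2 k eS \<theta> p \<le> Qbar c1 c2 k eS \<theta> q) \<longleftrightarrow> Qbar c1 c2 k eS \<theta> p = eS" for p
    using Qbar_ge[OF pos] Qbar_eq_iff[OF pos] by (metis antisym)
  show ?thesis
    unfolding double_angle minimal_iff Qbar_eq_iff[OF pos] by simp
qed

end
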